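(* Fix $2\le d\le 7$ and let $(a,b,c)$ be given by: $d=2$: $(0.5,0.7,0.27)$; $d=3$: $(0.4,0.6,0.2)$; $d=4$: $(0.3,0.5,0.1)$; $d=5$: $(0.3,0.4,0.1)$; $d=6$: $(0.27,0.32,0.1)$; $d=7$: $(0.26,0.27,0.01)$. Then $\|D\psi_x\|<0.99$ for all $x\in\mathcal{S}_{a,b,c}$.
   Context: $\psi$ acts on sequences $x=(x_n)_{n\ge1}$ with nonnegative entries by $\psi(x)_1=\big(\frac{1+x_1+x_1x_2}{1+2x_1}\big)^d$ and $\psi(x)_n=x_{n-1}^d\big(\frac{1+x_n+x_nx_{n+1}}{1+x_{n-1}+x_{n-1}x_n}\big)^d$ for $n\ge2$; here it is restricted to $\mathcal{R}$, the set of sequences of the form $x_i=z_i/z_{i-1}$ ($x_i=0$ if $z_{i-1}=0$), $i\ge1$, for $z$ a symmetric probability distribution on $\mathbb{Z}$ whose support is an interval or all of $\mathbb{Z}$. $\mathcal{S}_{a,b,c}:=\{x\in\mathcal{R}: a\le x_1\le b,\ 0\le x_n\le c\ \forall n\ge2\}$. $D\psi_x$ is the linear operator $(D\psi_x y)_i=\sum_{j\ge1}\frac{\partial\psi_i}{\partial x_j}(x)\,y_j$ (only $|i-j|\le1$ terms are nonzero). Sequences are normed by $\|y\|=\sup_{i\ge1}|y_i|$ if $d=2$ and $\|y\|=|y_1|+\sup_{i\ge2}|y_i|$ if $3\le d\le7$, and $\|D\psi_x\|=\sup_{\|y\|=1}\|D\psi_xy\|$ is the operator norm. *)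

theory Defs
  imports "HOL-Analysis.Analysis"
begin

text \<open>Sequences x = (x_n)_{n \<ge> 1} are modelled as functions nat \<Rightarrow> real;
  the value at index 0 is irrelevant and never used.\<close>

definition psi :: "nat \<Rightarrow> (nat \<Rightarrow> real) \<Rightarrow> nat \<Rightarrow> real" where
  "psi d x n =
     (if n = 1 then ((1 + x 1 + x 1 * x 2) / (1 + 2 * x 1)) ^ d
      else x (n - 1) ^ d *
           ((1 + x n + x n * x (n + 1)) / (1 + x (n - 1) + x (n - 1) * x n)) ^ d)"

definition good_distr :: "(int \<Rightarrow> real) \<Rightarrow> bool" where
  "good_distr z \<longleftrightarrow>
     (\<forall>k. z k \<ge> 0) \<and> (z has_sum 1) UNIV \<and> (\<forall>k. z (- k) = z k) \<and>
     (\<forall>a b c. z a \<noteq> 0 \<longrightarrow> z b \<noteq> 0 \<longrightarrow> a \<le> c \<longrightarrow> c \<le> b \<longrightarrow> z c \<noteq> 0)"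

definition R_set :: "(nat \<Rightarrow> real) set" where
  "R_set = {x. \<exists>z. good_distr z \<and>
      (\<forall>i\<ge>1. x i = (if z (int i - 1) = 0 then 0 else z (int i) / z (int i - 1)))}"

definition S_set :: "real \<Rightarrow> real \<Rightarrow> real \<Rightarrow> (nat \<Rightarrow> real) set" where
  "S_set a b c = {x \<in> R_set. a \<le> x 1 \<and> x 1 \<le> b \<and> (\<forall>n\<ge>2. 0 \<le> x n \<and> x n \<le> c)}"

text \<open>Directional derivative operator: (D psi_x y)_i = sum_j (d psi_i / d x_j)(x) y_j;
  only indices j with |i - j| \<le> 1 (and j \<ge> 1) can contribute, all of which lie in {1..i+1}.\<close>
definition Dpsi :: "nat \<Rightarrow> (nat \<Rightarrow> real) \<Rightarrow> (nat \<Rightarrow> real) \<Rightarrow> nat \<Rightarrow> real" where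
  "Dpsi d x y i = (\<Sum>j\<in>{1..i+1}. deriv (\<lambda>t. psi d (x(j := t)) i) (x j) * y j)"

definition seqnorm :: "nat \<Rightarrow> (nat \<Rightarrow> real) \<Rightarrow> ereal" where
  "seqnorm d y =
     (if d = 2 then (SUP i\<in>{1..}. ereal \<bar>y i\<bar>)
      else ereal \<bar>y 1\<bar> + (SUP i\<in>{2..}. ereal \<bar>y i\<bar>))"

definition opnorm_Dpsi :: "nat \<Rightarrow> (nat \<Rightarrow> real) \<Rightarrow> ereal" where
  "opnorm_Dpsi d x = (SUP y\<in>{y. seqnorm d y = 1}. seqnorm d (Dpsi d x y))"

definition abc :: "nat \<Rightarrow> real \<times> real \<times> real" where
  "abc d = (if d = 2 then (0.5, 0.7, 0.27)
           else if d = 3 then (0.4, 0.6, 0.2)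
           else if d = 4 then (0.3, 0.5, 0.1)
           else if d = 5 then (0.3, 0.4, 0.1)
           else if d = 6 then (0.27, 0.32, 0.1)
           else (0.26, 0.27, 0.01))"

end

theory Submission
  imports Defs
begin

text \<open>For i \<ge> 2 one has psi(x)_i = q^d with q = x_(i-1) (1 + x_i + x_i x_(i+1)) / (1 + x_(i-1) + x_(i-1) x_i),
  so row i of D psi_x has three entries, each d q^(d-1) times a rational function of x_(i-1), x_i,
  x_(i+1); on S_(a,b,c) both factors are bounded by monotonicity in these variables. Row 1 has two
  entries; with s = x_1 / (1 + 2 x_1) and t = 1 - x_2 its diagonal entry is -d (1 - 2s)^2 t (1 - st)^(d-1),
  and t (1 - st)^(d-1) is maximised exactly over t \<in> [1 - c, 1].

  For d = 2 the operator norm is bounded by the supremum of the absolute row sums. For d \<ge> 3 and the norm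
  |y_1| + sup_(j \<ge> 2) |y_j| it is at most max (\<alpha>1 + \<alpha>2) (\<beta>1 + \<beta>2), where \<alpha>1, \<beta>1 bound the
  weights of |y_1| and of sup_(j \<ge> 2) |y_j| in row 1, and \<alpha>2, \<beta>2 bound them uniformly in the rows
  i \<ge> 2 (only row 2 involves y_1).\<close>

definition row_base :: "real \<Rightarrow> real \<Rightarrow> real \<Rightarrow> real" where
  "row_base u z w = u * (1 + z + z * w) / (1 + u + u * z)"

lemma psi_eq_row_base:
  assumes "2 \<le> i"
  shows "psi d x i = row_base (x (i - 1)) (x i) (x (i + 1)) ^ d"
  using assms by (simp add: psi_def row_base_def power_mult_distrib power_divide)

lemma deriv_power_at:
  assumes "(f has_field_derivative f') (at t)"
  shows "deriv (\<lambda>t. f t ^ d) t = real d * f t ^ (d - 1) * f'"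
  by (rule DERIV_imp_deriv, rule DERIV_fun_pow[OF assms])

lemma Dpsi_eq_neighbours:
  assumes "2 \<le> i"
  shows "Dpsi d x y i = (\<Sum>j\<in>{i - 1, i, i + 1}. deriv (\<lambda>t. psi d (x(j := t)) i) (x j) * y j)"
  unfolding Dpsi_def
proof (rule sum.mono_neutral_right)
  show "\<forall>j\<in>{1..i + 1} - {i - 1, i, i + 1}. deriv (\<lambda>t. psi d (x(j := t)) i) (x j) * y j = 0"
    using assms by (auto simp: psi_eq_row_base)
qed (use assms in auto)

definition sub_coeff :: "nat \<Rightarrow> real \<Rightarrow> real \<Rightarrow> real \<Rightarrow> real" where
  "sub_coeff d u z w = real d * row_base u z w ^ (d - 1) * ((1 + z + z * w) / (1 + u + u * z)\<^sup>2)"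

definition diag_coeff :: "nat \<Rightarrow> real \<Rightarrow> real \<Rightarrow> real \<Rightarrow> real" where
  "diag_coeff d u z w = real d * row_base u z w ^ (d - 1) * (u * (1 + w + u * w) / (1 + u + u * z)\<^sup>2)"

definition super_coeff :: "nat \<Rightarrow> real \<Rightarrow> real \<Rightarrow> real \<Rightarrow> real" where
  "super_coeff d u z w = real d * row_base u z w ^ (d - 1) * (u * z / (1 + u + u * z))"

lemma Dpsi_row:
  fixes x y :: "nat \<Rightarrow> real"
  assumes i: "2 \<le> i" and nonneg: "0 \<le> x (i - 1)" "0 \<le> x i"
  defines "u \<equiv> x (i - 1)" and "z \<equiv> x i" and "w \<equiv> x (i + 1)"
  shows "Dpsi d x y i = sub_coeff d u z w * y (i - 1) + diag_coeff d u z w * y i + super_coeff d u z w * y (i + 1)"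
proof -
  define N where "N = 1 + u + u * z"
  have N: "0 < N" using nonneg by (simp add: N_def u_def z_def add_pos_nonneg)
  have distinct: "i - 1 \<noteq> i" "i - 1 \<noteq> i + 1" using i by auto
  have "((\<lambda>t. row_base t z w) has_field_derivative (1 + z + z * w) / N\<^sup>2) (at u)"
    "((\<lambda>t. row_base u t w) has_field_derivative u * (1 + w + u * w) / N\<^sup>2) (at z)"
    using N unfolding row_base_def N_def
    by (auto intro!: derivative_eq_intros simp: field_simps power2_eq_square)
  moreover have "((\<lambda>t. row_base u z t) has_field_derivative u * z / N) (at w)"
    unfolding row_base_def N_def by (auto intro!: DERIV_cdivide derivative_eq_intros simp: algebra_simps)
  moreover have "(\<lambda>t. psi d (x(i - 1 := t)) i) = (\<lambda>t. row_base t z w ^ d)"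
    "(\<lambda>t. psi d (x(i := t)) i) = (\<lambda>t. row_base u t w ^ d)"
    "(\<lambda>t. psi d (x(i + 1 := t)) i) = (\<lambda>t. row_base u z t ^ d)"
    using i distinct by (auto simp: psi_eq_row_base u_def z_def w_def)
  ultimately show ?thesis
    using i distinct
    by (simp add: Dpsi_eq_neighbours deriv_power_at sub_coeff_def diag_coeff_def super_coeff_def
        N_def u_def z_def w_def)
qed

definition first_diag_coeff :: "nat \<Rightarrow> real \<Rightarrow> real \<Rightarrow> real" where
  "first_diag_coeff d x1 x2 =
     real d * ((1 + x1 + x1 * x2) / (1 + 2 * x1)) ^ (d - 1) * ((x2 - 1) / (1 + 2 * x1)\<^sup>2)"

definition first_super_coeff :: "nat \<Rightarrow> real \<Rightarrow> real \<Rightarrow> real" where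
  "first_super_coeff d x1 x2 =
     real d * ((1 + x1 + x1 * x2) / (1 + 2 * x1)) ^ (d - 1) * (x1 / (1 + 2 * x1))"

lemma Dpsi_first_row:
  fixes x y :: "nat \<Rightarrow> real"
  assumes "0 \<le> x 1"
  shows "Dpsi d x y 1 = first_diag_coeff d (x 1) (x 2) * y 1 + first_super_coeff d (x 1) (x 2) * y 2"
proof -
  have pos: "0 < 1 + 2 * x 1" using assms by simp
  have "((\<lambda>t. (1 + t + t * x 2) / (1 + 2 * t)) has_field_derivative (x 2 - 1) / (1 + 2 * x 1)\<^sup>2) (at (x 1))"
    using pos by (auto intro!: derivative_eq_intros simp: field_simps power2_eq_square)
  moreover have "((\<lambda>t. (1 + x 1 + x 1 * t) / (1 + 2 * x 1)) has_field_derivative x 1 / (1 + 2 * x 1)) (at (x 2))"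
    by (auto intro!: DERIV_cdivide derivative_eq_intros)
  moreover have "(\<lambda>t. psi d (x(1 := t)) 1) = (\<lambda>t. ((1 + t + t * x 2) / (1 + 2 * t)) ^ d)"
    "(\<lambda>t. psi d (x(2 := t)) 1) = (\<lambda>t. ((1 + x 1 + x 1 * t) / (1 + 2 * x 1)) ^ d)"
    by (auto simp: psi_def)
  ultimately show ?thesis
    by (simp add: Dpsi_def numeral_2_eq_2 deriv_power_at first_diag_coeff_def first_super_coeff_def)
qed

lemma divide_one_plus_mono:
  fixes u U k :: real
  assumes "0 \<le> u" "u \<le> U" "0 \<le> k"
  shows "u / (1 + k * u) \<le> U / (1 + k * U)"
proof -
  have "u * (1 + k * U) \<le> U * (1 + k * u)"
    using assms by (simp add: algebra_simps mult_left_mono)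
  then show ?thesis
    using assms by (simp add: divide_simps add_pos_nonneg)
qed

lemma abs_scaled_power_le:
  fixes q Q f F :: real
  assumes "0 \<le> q" "q \<le> Q" "0 \<le> f" "f \<le> F"
  shows "\<bar>real d * q ^ (d - 1) * f\<bar> \<le> real d * Q ^ (d - 1) * F"
proof -
  have "q ^ (d - 1) * f \<le> Q ^ (d - 1) * F"
    using assms by (intro mult_mono power_mono) auto
  then show ?thesis
    using assms by (simp add: abs_mult mult.assoc mult_left_mono)
qed

text \<open>The left-hand side increases in w and, for w = c, in z.\<close>
lemma numerator_ratio_le:
  fixes u z w c :: real
  assumes "0 \<le> u" "0 \<le> z" "z \<le> c" "0 \<le> w" "w \<le> c"
  shows "(1 + z + z * w) / (1 + u + u * z) \<le> (1 + c + c\<^sup>2) / (1 + u * (1 + c))"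
proof -
  have "(1 + z + z * w) * (1 + u * (1 + c)) \<le> (1 + z + z * c) * (1 + u * (1 + c))"
    using assms by (intro mult_right_mono) (auto intro: mult_left_mono)
  also have "\<dots> = (1 + c + c\<^sup>2) * (1 + u + u * z) - (c - z) * (1 + c + u * c)"
    by (simp add: algebra_simps power2_eq_square)
  also have "\<dots> \<le> (1 + c + c\<^sup>2) * (1 + u + u * z)"
    using assms by simp
  finally show ?thesis
    using assms by (simp add: divide_simps add_pos_nonneg)
qed

definition base_bound :: "real \<Rightarrow> real \<Rightarrow> real" where
  "base_bound U c = U * (1 + c + c\<^sup>2) / (1 + U * (1 + c))"

definition sub_coeff_bound :: "nat \<Rightarrow> real \<Rightarrow> real \<Rightarrow> real \<Rightarrow> real" where
  "sub_coeff_bound d L U c =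
     real d * base_bound U c ^ (d - 1) * ((1 + c + c\<^sup>2) / ((1 + L * (1 + c)) * (1 + L)))"

definition diag_coeff_bound :: "nat \<Rightarrow> real \<Rightarrow> real \<Rightarrow> real \<Rightarrow> real" where
  "diag_coeff_bound d L U c = real d * base_bound U c ^ (d - 1) * (U / (1 + U) * (1 / (1 + L) + c))"

definition super_coeff_bound :: "nat \<Rightarrow> real \<Rightarrow> real \<Rightarrow> real" where
  "super_coeff_bound d U c = real d * base_bound U c ^ (d - 1) * (U / (1 + U) * c)"

context
  fixes L U c u z w :: real
  assumes u: "0 \<le> L" "L \<le> u" "u \<le> U" and z: "0 \<le> z" "z \<le> c" and w: "0 \<le> w" "w \<le> c"
begin

lemma row_denominator_ge: "1 + L \<le> 1 + u + u * z"
  using u z by (simp add: add_increasing2)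

lemma row_denominator_pos: "0 < 1 + u + u * z"
  using u row_denominator_ge by linarith

lemma row_base_bounds: "0 \<le> row_base u z w" "row_base u z w \<le> base_bound U c"
proof -
  show "0 \<le> row_base u z w"
    using u z w by (simp add: row_base_def)
  have "row_base u z w = u * ((1 + z + z * w) / (1 + u + u * z))"
    by (simp add: row_base_def)
  also have "\<dots> \<le> u * ((1 + c + c\<^sup>2) / (1 + u * (1 + c)))"
    using u z w by (intro mult_left_mono numerator_ratio_le) auto
  also have "\<dots> = (1 + c + c\<^sup>2) * (u / (1 + (1 + c) * u))"
    by (simp add: mult.commute)
  also have "\<dots> \<le> (1 + c + c\<^sup>2) * (U / (1 + (1 + c) * U))"
    using u z by (intro mult_left_mono divide_one_plus_mono) auto
  also have "\<dots> = base_bound U c"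
    by (simp add: base_bound_def mult.commute)
  finally show "row_base u z w \<le> base_bound U c" .
qed

lemma divide_row_denominator_le: "u / (1 + u + u * z) \<le> U / (1 + U)"
proof -
  have "u / (1 + u + u * z) \<le> u / (1 + 1 * u)"
    using u z row_denominator_pos by (intro divide_left_mono) (auto intro!: mult_pos_pos)
  also have "\<dots> \<le> U / (1 + 1 * U)"
    using u by (intro divide_one_plus_mono) auto
  finally show ?thesis by simp
qed

lemma abs_sub_coeff_le: "\<bar>sub_coeff d u z w\<bar> \<le> sub_coeff_bound d L U c"
proof -
  have "(1 + z + z * w) / (1 + u + u * z)\<^sup>2 = (1 + z + z * w) / (1 + u + u * z) * (1 / (1 + u + u * z))"
    by (simp add: power2_eq_square)
  also have "\<dots> \<le> (1 + c + c\<^sup>2) / (1 + u * (1 + c)) * (1 / (1 + L))"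
    using u z w row_denominator_ge row_denominator_pos
    by (intro mult_mono numerator_ratio_le divide_left_mono) (auto intro!: mult_pos_pos)
  also have "\<dots> \<le> (1 + c + c\<^sup>2) / (1 + L * (1 + c)) * (1 / (1 + L))"
    using u z by (intro mult_right_mono divide_left_mono mult_right_mono)
      (auto intro!: mult_pos_pos add_pos_nonneg)
  finally show ?thesis
    unfolding sub_coeff_def sub_coeff_bound_def
    using row_base_bounds z w by (intro abs_scaled_power_le) auto
qed

lemma abs_diag_coeff_le: "\<bar>diag_coeff d u z w\<bar> \<le> diag_coeff_bound d L U c"
proof -
  have "(1 + w + u * w) / (1 + u + u * z) \<le> (1 + w + u * w) / (1 + u)"
    using u z w by (intro divide_left_mono) (auto intro!: mult_pos_pos add_pos_nonneg)
  also have "\<dots> = 1 / (1 + u) + w"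
    using u by (simp add: field_simps)
  also have "\<dots> \<le> 1 / (1 + L) + c"
    using u w by (intro add_mono divide_left_mono) auto
  finally have "u / (1 + u + u * z) * ((1 + w + u * w) / (1 + u + u * z)) \<le> U / (1 + U) * (1 / (1 + L) + c)"
    using divide_row_denominator_le u w row_denominator_pos by (intro mult_mono) auto
  then show ?thesis
    unfolding diag_coeff_def diag_coeff_bound_def
    using row_base_bounds u w row_denominator_pos by (intro abs_scaled_power_le) (auto simp: power2_eq_square)
qed

lemma abs_super_coeff_le: "\<bar>super_coeff d u z w\<bar> \<le> super_coeff_bound d U c"
proof -
  have "u / (1 + u + u * z) * z \<le> U / (1 + U) * c"
    using divide_row_denominator_le u z row_denominator_pos by (intro mult_mono) auto
  then show ?thesis
    unfolding super_coeff_def super_coeff_bound_def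
    using row_base_bounds u z row_denominator_pos by (intro abs_scaled_power_le) auto
qed

end

lemma abs_Dpsi_row_le:
  fixes x y :: "nat \<Rightarrow> real"
  assumes i: "2 \<le> i" and x: "0 \<le> L" "L \<le> x (i - 1)" "x (i - 1) \<le> U"
    "0 \<le> x i" "x i \<le> c" "0 \<le> x (i + 1)" "x (i + 1) \<le> c"
    and y: "\<bar>y (i - 1)\<bar> \<le> Y1" "\<bar>y i\<bar> \<le> Y" "\<bar>y (i + 1)\<bar> \<le> Y"
  shows "\<bar>Dpsi d x y i\<bar>
           \<le> sub_coeff_bound d L U c * Y1 + (diag_coeff_bound d L U c + super_coeff_bound d U c) * Y"
proof -
  have "\<bar>Dpsi d x y i\<bar> \<le> \<bar>sub_coeff d (x (i - 1)) (x i) (x (i + 1))\<bar> * \<bar>y (i - 1)\<bar>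
      + \<bar>diag_coeff d (x (i - 1)) (x i) (x (i + 1))\<bar> * \<bar>y i\<bar>
      + \<bar>super_coeff d (x (i - 1)) (x i) (x (i + 1))\<bar> * \<bar>y (i + 1)\<bar>"
    using Dpsi_row[of i x d y] i x
    by (simp add: abs_mult[symmetric] order_trans[OF abs_triangle_ineq add_mono])
  also have "\<dots> \<le> sub_coeff_bound d L U c * Y1 + diag_coeff_bound d L U c * Y + super_coeff_bound d U c * Y"
    using abs_sub_coeff_le[OF x, of d] abs_diag_coeff_le[OF x, of d] abs_super_coeff_le[OF x, of d] y
    by (intro add_mono mult_mono) (auto intro: order_trans[OF abs_ge_zero])
  finally show ?thesis
    by (simp add: algebra_simps)
qed

lemma has_real_derivative_times_one_minus_power:
  fixes s :: real
  assumes "2 \<le> n"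
  shows "((\<lambda>t. t * (1 - s * t) ^ (n - 1)) has_real_derivative
           (1 - s * t) ^ (n - 2) * (1 - real n * s * t)) (at t)"
proof -
  have "((\<lambda>t. t * (1 - s * t) ^ (n - 1)) has_real_derivative
           1 * (1 - s * t) ^ (n - 1) + t * (real (n - 1) * (1 - s * t) ^ (n - 1 - 1) * (0 - s * 1))) (at t)"
    by (rule derivative_eq_intros refl)+ (simp add: algebra_simps)
  moreover obtain k where "n = Suc (Suc k)"
    using assms by (metis add_2_eq_Suc le_Suc_ex)
  ultimately show ?thesis
    by (simp add: algebra_simps)
qed

lemma times_one_minus_power_mono:
  fixes s t t' :: real
  assumes n: "2 \<le> n" and s: "0 \<le> s" and t: "0 \<le> t" "t \<le> t'" "real n * s * t' \<le> 1"
  shows "t * (1 - s * t) ^ (n - 1) \<le> t' * (1 - s * t') ^ (n - 1)"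
proof (rule DERIV_nonneg_imp_nondecreasing[OF \<open>t \<le> t'\<close>], intro exI conjI)
  fix x assume x: "t \<le> x" "x \<le> t'"
  show "((\<lambda>t. t * (1 - s * t) ^ (n - 1)) has_real_derivative
          (1 - s * x) ^ (n - 2) * (1 - real n * s * x)) (at x)"
    using has_real_derivative_times_one_minus_power[OF n] .
  have "real n * s * x \<le> real n * s * t'"
    using x s by (intro mult_left_mono) auto
  moreover have "s * x \<le> real n * s * x"
    using n s t x by (intro mult_right_mono) (auto simp: mult_le_cancel_right1)
  ultimately show "0 \<le> (1 - s * x) ^ (n - 2) * (1 - real n * s * x)"
    using t by simp
qed

lemma times_one_minus_power_antimono:
  fixes s t t' :: real
  assumes n: "2 \<le> n" and s: "0 \<le> s" and t: "t \<le> t'" "1 \<le> real n * s * t" "s * t' \<le> 1"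
  shows "t' * (1 - s * t') ^ (n - 1) \<le> t * (1 - s * t) ^ (n - 1)"
proof (rule DERIV_nonpos_imp_nonincreasing[OF \<open>t \<le> t'\<close>], intro exI conjI)
  fix x assume x: "t \<le> x" "x \<le> t'"
  show "((\<lambda>t. t * (1 - s * t) ^ (n - 1)) has_real_derivative
          (1 - s * x) ^ (n - 2) * (1 - real n * s * x)) (at x)"
    using has_real_derivative_times_one_minus_power[OF n] .
  have "real n * s * t \<le> real n * s * x"
    using x s by (intro mult_left_mono) auto
  moreover have "s * x \<le> s * t'"
    using x s by (intro mult_left_mono) auto
  ultimately show "(1 - s * x) ^ (n - 2) * (1 - real n * s * x) \<le> 0"
    using t by (simp add: mult_nonneg_nonpos)
qed

lemma times_one_minus_power_le_clamped_peak:
  fixes s t t0 t1 :: real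
  assumes n: "2 \<le> n" and s: "0 < s" and t: "0 \<le> t0" "t0 \<le> t" "t \<le> t1" "s * t1 \<le> 1"
  defines "m \<equiv> max t0 (min t1 (1 / (real n * s)))"
  shows "t * (1 - s * t) ^ (n - 1) \<le> m * (1 - s * m) ^ (n - 1)"
proof -
  define p where "p = 1 / (real n * s)"
  have "0 < real n * s" using n s by simp
  then have scale: "real n * s * r \<le> 1 \<longleftrightarrow> r \<le> p" "1 \<le> real n * s * r \<longleftrightarrow> p \<le> r" for r
    by (simp_all add: p_def field_simps)
  show ?thesis
  proof (cases "t \<le> p")
    case True
    then have "t \<le> m" "m \<le> p"
      using t by (auto simp: m_def p_def)
    then show ?thesis
      using n s t scale by (intro times_one_minus_power_mono) auto
  next
    case False
    then have "m \<le> t" "p \<le> m"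
      using t by (auto simp: m_def p_def)
    moreover have "s * t \<le> 1"
      using s t mult_left_mono[of t t1 s] by linarith
    ultimately show ?thesis
      using n s t scale by (intro times_one_minus_power_antimono) auto
  qed
qed

text \<open>m maximises t (1 - s t)^(d-1) over t \<in> [1 - c, 1], where t stands for 1 - x_2.\<close>
definition first_diag_coeff_bound :: "nat \<Rightarrow> real \<Rightarrow> real \<Rightarrow> real" where
  "first_diag_coeff_bound d a c =
     (let s = a / (1 + 2 * a); m = max (1 - c) (min 1 (1 / (real d * s)))
      in real d * (1 - 2 * s)\<^sup>2 * (m * (1 - s * m) ^ (d - 1)))"

definition first_super_coeff_bound :: "nat \<Rightarrow> real \<Rightarrow> real \<Rightarrow> real \<Rightarrow> real" where
  "first_super_coeff_bound d a b c = real d * (1 - a / (1 + 2 * a) * (1 - c)) ^ (d - 1) * (b / (1 + 2 * b))"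

lemma abs_first_row_coeffs_le:
  fixes x1 x2 :: real
  assumes d: "2 \<le> d" and x1: "0 < a" "a \<le> x1" "x1 \<le> b" and x2: "0 \<le> x2" "x2 \<le> c" "c \<le> 1"
  shows "\<bar>first_diag_coeff d x1 x2\<bar> \<le> first_diag_coeff_bound d a c"
    and "\<bar>first_super_coeff d x1 x2\<bar> \<le> first_super_coeff_bound d a b c"
proof -
  define r where "r = (1 + x1 + x1 * x2) / (1 + 2 * x1)"
  define s0 where "s0 = a / (1 + 2 * a)"
  define s where "s = x1 / (1 + 2 * x1)"
  define t where "t = 1 - x2"
  have s0: "0 < s0" "s0 \<le> s" "s * 1 \<le> 1"
    using x1 divide_one_plus_mono[of a x1 2] by (auto simp: s0_def s_def)
  have s_le: "s \<le> b / (1 + 2 * b)"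
    using x1 divide_one_plus_mono[of x1 b 2] by (simp add: s_def)
  have t: "1 - c \<le> t" "t \<le> 1" "0 \<le> 1 - c"
    using x2 by (auto simp: t_def)
  have two_s: "1 - 2 * s = 1 / (1 + 2 * x1)" and r_eq: "r = 1 - s * t"
    using x1 by (auto simp: s_def t_def r_def field_simps)
  have r: "0 \<le> r" "r \<le> 1 - s0 * t"
    using x1 x2 by (simp add: r_def) (use s0 t mult_right_mono[of s0 s t] in \<open>simp add: r_eq\<close>)
  have "\<bar>first_diag_coeff d x1 x2\<bar> = real d * (1 - 2 * s)\<^sup>2 * (t * r ^ (d - 1))"
    using r t x1 by (simp add: first_diag_coeff_def r_def[symmetric] two_s t_def abs_mult power_divide)
  also have "\<dots> \<le> real d * (1 - 2 * s0)\<^sup>2 * (t * (1 - s0 * t) ^ (d - 1))"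
    using s0 r t two_s x1 by (intro mult_mono mult_left_mono power_mono) auto
  also have "\<dots> \<le> first_diag_coeff_bound d a c"
    unfolding first_diag_coeff_bound_def Let_def s0_def[symmetric]
    using d s0 t by (intro mult_left_mono times_one_minus_power_le_clamped_peak) auto
  finally show "\<bar>first_diag_coeff d x1 x2\<bar> \<le> first_diag_coeff_bound d a c" .
  have "s0 * (1 - c) \<le> s0 * t"
    using s0 t by (intro mult_left_mono) auto
  then have r_le: "r \<le> 1 - s0 * (1 - c)"
    using r by linarith
  have "\<bar>first_super_coeff d x1 x2\<bar> = real d * r ^ (d - 1) * s"
    using r x1 by (simp add: first_super_coeff_def r_def[symmetric] s_def abs_mult)
  also have "\<dots> \<le> first_super_coeff_bound d a b c"
    unfolding first_super_coeff_bound_def s0_def[symmetric]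
    using r r_le s0 s_le by (intro mult_mono mult_left_mono power_mono) auto
  finally show "\<bar>first_super_coeff d x1 x2\<bar> \<le> first_super_coeff_bound d a b c" .
qed

lemma abs_Dpsi_first_row_le:
  fixes x y :: "nat \<Rightarrow> real"
  assumes d: "2 \<le> d" and x: "0 < a" "a \<le> x 1" "x 1 \<le> b" "0 \<le> x 2" "x 2 \<le> c" "c \<le> 1"
    and y: "\<bar>y 1\<bar> \<le> Y1" "\<bar>y 2\<bar> \<le> Y"
  shows "\<bar>Dpsi d x y 1\<bar> \<le> first_diag_coeff_bound d a c * Y1 + first_super_coeff_bound d a b c * Y"
proof -
  have "\<bar>Dpsi d x y 1\<bar> \<le> \<bar>first_diag_coeff d (x 1) (x 2)\<bar> * \<bar>y 1\<bar> + \<bar>first_super_coeff d (x 1) (x 2)\<bar> * \<bar>y 2\<bar>"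
    using Dpsi_first_row[of x d y] x by (simp add: abs_mult[symmetric] abs_triangle_ineq)
  also have "\<dots> \<le> first_diag_coeff_bound d a c * Y1 + first_super_coeff_bound d a b c * Y"
    using abs_first_row_coeffs_le[OF d x] y by (intro add_mono mult_mono) auto
  finally show ?thesis .
qed

lemma opnorm_Dpsi_2_leI:
  assumes "\<And>y i. \<forall>j\<ge>1. \<bar>y j\<bar> \<le> 1 \<Longrightarrow> 1 \<le> i \<Longrightarrow> \<bar>Dpsi 2 x y i\<bar> \<le> K"
  shows "opnorm_Dpsi 2 x \<le> ereal K"
  unfolding opnorm_Dpsi_def
proof (rule SUP_least)
  fix y assume "y \<in> {y. seqnorm 2 y = 1}"
  then have sup: "(SUP i\<in>{1..}. ereal \<bar>y i\<bar>) = 1"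
    by (simp add: seqnorm_def)
  have "\<forall>j\<ge>1. \<bar>y j\<bar> \<le> 1"
  proof (intro allI impI)
    fix j :: nat assume "1 \<le> j"
    then have "ereal \<bar>y j\<bar> \<le> (SUP i\<in>{1..}. ereal \<bar>y i\<bar>)"
      by (intro SUP_upper) auto
    then show "\<bar>y j\<bar> \<le> 1"
      using sup by simp
  qed
  then show "seqnorm 2 (Dpsi 2 x y) \<le> ereal K"
    unfolding seqnorm_def using assms by (auto intro!: SUP_least)
qed

lemma opnorm_Dpsi_weighted_leI:
  fixes \<alpha>1 \<alpha>2 \<beta>1 \<beta>2 :: real
  assumes d: "d \<noteq> 2"
    and first_row: "\<And>y \<tau>. \<forall>j\<ge>2. \<bar>y j\<bar> \<le> \<tau> \<Longrightarrow> 0 \<le> \<tau> \<Longrightarrow>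
                      \<bar>Dpsi d x y 1\<bar> \<le> \<alpha>1 * \<bar>y 1\<bar> + \<beta>1 * \<tau>"
    and other_rows: "\<And>y \<tau> i. \<forall>j\<ge>2. \<bar>y j\<bar> \<le> \<tau> \<Longrightarrow> 0 \<le> \<tau> \<Longrightarrow> 2 \<le> i \<Longrightarrow>
                      \<bar>Dpsi d x y i\<bar> \<le> \<alpha>2 * \<bar>y 1\<bar> + \<beta>2 * \<tau>"
  shows "opnorm_Dpsi d x \<le> ereal (max (\<alpha>1 + \<alpha>2) (\<beta>1 + \<beta>2))"
  unfolding opnorm_Dpsi_def
proof (rule SUP_least)
  fix y assume "y \<in> {y. seqnorm d y = 1}"
  then have norm: "ereal \<bar>y 1\<bar> + (SUP i\<in>{2..}. ereal \<bar>y i\<bar>) = 1"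
    using d by (simp add: seqnorm_def)
  have upper: "ereal \<bar>y j\<bar> \<le> (SUP i\<in>{2..}. ereal \<bar>y i\<bar>)" if "2 \<le> j" for j
    using that by (intro SUP_upper) auto
  then obtain \<tau> where \<tau>: "(SUP i\<in>{2..}. ereal \<bar>y i\<bar>) = ereal \<tau>"
    using norm by (cases "SUP i\<in>{2..}. ereal \<bar>y i\<bar>") (auto dest: spec[of _ 2])
  have sum: "\<bar>y 1\<bar> + \<tau> = 1" and y: "\<forall>j\<ge>2. \<bar>y j\<bar> \<le> \<tau>"
    using norm \<tau> upper by auto
  have \<tau>0: "0 \<le> \<tau>"
    using y[rule_format, of 2] abs_ge_zero[of "y 2"] by linarith
  have "(SUP i\<in>{2..}. ereal \<bar>Dpsi d x y i\<bar>) \<le> ereal (\<alpha>2 * \<bar>y 1\<bar> + \<beta>2 * \<tau>)"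
    using other_rows[OF y \<tau>0] by (auto intro!: SUP_least)
  moreover have "seqnorm d (Dpsi d x y) = ereal \<bar>Dpsi d x y 1\<bar> + (SUP i\<in>{2..}. ereal \<bar>Dpsi d x y i\<bar>)"
    using d by (simp add: seqnorm_def)
  ultimately have "seqnorm d (Dpsi d x y) \<le> ereal (\<alpha>1 * \<bar>y 1\<bar> + \<beta>1 * \<tau>) + ereal (\<alpha>2 * \<bar>y 1\<bar> + \<beta>2 * \<tau>)"
    using first_row[OF y \<tau>0] by (simp only: add_mono ereal_less_eq(3))
  also have "\<dots> = ereal ((\<alpha>1 + \<alpha>2) * \<bar>y 1\<bar> + (\<beta>1 + \<beta>2) * \<tau>)"
    by (simp add: algebra_simps)
  also have "\<dots> \<le> ereal (max (\<alpha>1 + \<alpha>2) (\<beta>1 + \<beta>2) * (\<bar>y 1\<bar> + \<tau>))"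
    using \<tau>0 by (simp add: distrib_left add_mono mult_right_mono)
  finally show "seqnorm d (Dpsi d x y) \<le> ereal (max (\<alpha>1 + \<alpha>2) (\<beta>1 + \<beta>2))"
    using sum by simp
qed

definition row_bound :: "nat \<Rightarrow> real \<Rightarrow> real \<Rightarrow> real \<Rightarrow> real" where
  "row_bound d L U c = sub_coeff_bound d L U c + diag_coeff_bound d L U c + super_coeff_bound d U c"

lemma abs_Dpsi_row_le_row_bound:
  fixes x y :: "nat \<Rightarrow> real"
  assumes "2 \<le> i" "0 \<le> L" "L \<le> x (i - 1)" "x (i - 1) \<le> U"
    and "0 \<le> x i" "x i \<le> c" "0 \<le> x (i + 1)" "x (i + 1) \<le> c"
    and "\<forall>j\<ge>i - 1. \<bar>y j\<bar> \<le> Y"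
  shows "\<bar>Dpsi d x y i\<bar> \<le> row_bound d L U c * Y"
  using abs_Dpsi_row_le[of i L x U c y Y Y d] assms by (simp add: row_bound_def algebra_simps)

lemma opnorm_Dpsi_2_le:
  fixes x :: "nat \<Rightarrow> real"
  assumes x: "0 < a" "a \<le> x 1" "x 1 \<le> b" and m: "a \<le> m" "m \<le> b" and c: "c \<le> 1"
    and xn: "\<And>n. 2 \<le> n \<Longrightarrow> 0 \<le> x n \<and> x n \<le> c"
  shows "opnorm_Dpsi 2 x \<le> ereal (max (first_diag_coeff_bound 2 a c + first_super_coeff_bound 2 a b c)
           (max (row_bound 2 a m c) (max (row_bound 2 m b c) (row_bound 2 0 c c))))"
    (is "_ \<le> ereal (max ?first (max ?low (max ?high ?rest)))")
proof (rule opnorm_Dpsi_2_leI)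
  fix y :: "nat \<Rightarrow> real" and i :: nat
  assume y: "\<forall>j\<ge>1. \<bar>y j\<bar> \<le> 1" and i: "1 \<le> i"
  consider "i = 1" | "i = 2" "x 1 \<le> m" | "i = 2" "m \<le> x 1" | "3 \<le> i"
    using i by linarith
  then have "\<bar>Dpsi 2 x y i\<bar> \<le> ?first \<or> \<bar>Dpsi 2 x y i\<bar> \<le> ?low \<or> \<bar>Dpsi 2 x y i\<bar> \<le> ?high \<or> \<bar>Dpsi 2 x y i\<bar> \<le> ?rest"
  proof cases
    case 1
    then show ?thesis
      using abs_Dpsi_first_row_le[of 2 a x b c y 1 1] x c xn[of 2] y by simp
  next
    case 2
    then show ?thesis
      using abs_Dpsi_row_le_row_bound[of i a x m c y 1 2] x xn[of 2] xn[of 3] y by simp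
  next
    case 3
    then show ?thesis
      using abs_Dpsi_row_le_row_bound[of i m x b c y 1 2] x m xn[of 2] xn[of 3] y by simp
  next
    case 4
    then show ?thesis
      using abs_Dpsi_row_le_row_bound[of i 0 x c c y 1 2] xn[of "i - 1"] xn[of i] xn[of "i + 1"] y by simp
  qed
  then show "\<bar>Dpsi 2 x y i\<bar> \<le> max ?first (max ?low (max ?high ?rest))"
    by linarith
qed

lemma opnorm_Dpsi_ge3_le:
  fixes x :: "nat \<Rightarrow> real"
  assumes d: "3 \<le> d" and x: "0 < a" "a \<le> x 1" "x 1 \<le> b" and c: "c \<le> 1"
    and xn: "\<And>n. 2 \<le> n \<Longrightarrow> 0 \<le> x n \<and> x n \<le> c"
  shows "opnorm_Dpsi d x \<le> ereal (max (first_diag_coeff_bound d a c + sub_coeff_bound d a b c)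
           (first_super_coeff_bound d a b c
              + max (diag_coeff_bound d a b c + super_coeff_bound d b c) (row_bound d 0 c c)))"
proof (rule opnorm_Dpsi_weighted_leI)
  fix y :: "nat \<Rightarrow> real" and \<tau> :: real
  assume y: "\<forall>j\<ge>2. \<bar>y j\<bar> \<le> \<tau>"
  show "\<bar>Dpsi d x y 1\<bar> \<le> first_diag_coeff_bound d a c * \<bar>y 1\<bar> + first_super_coeff_bound d a b c * \<tau>"
    using d x c xn[of 2] y by (intro abs_Dpsi_first_row_le) auto
next
  fix y :: "nat \<Rightarrow> real" and \<tau> :: real and i :: nat
  assume y: "\<forall>j\<ge>2. \<bar>y j\<bar> \<le> \<tau>" and \<tau>: "0 \<le> \<tau>" and i: "2 \<le> i"
  define rest where "rest = max (diag_coeff_bound d a b c + super_coeff_bound d b c) (row_bound d 0 c c)"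
  have sub_nonneg: "0 \<le> sub_coeff_bound d a b c"
    using x c xn[of 2] by (simp add: sub_coeff_bound_def base_bound_def)
  show "\<bar>Dpsi d x y i\<bar> \<le> sub_coeff_bound d a b c * \<bar>y 1\<bar> + rest * \<tau>"
  proof (cases "i = 2")
    case True
    then have "\<bar>Dpsi d x y i\<bar>
        \<le> sub_coeff_bound d a b c * \<bar>y 1\<bar> + (diag_coeff_bound d a b c + super_coeff_bound d b c) * \<tau>"
      using x xn[of 2] xn[of 3] y by (intro abs_Dpsi_row_le) auto
    also have "\<dots> \<le> sub_coeff_bound d a b c * \<bar>y 1\<bar> + rest * \<tau>"
      using \<tau> by (intro add_left_mono mult_right_mono) (auto simp: rest_def)
    finally show ?thesis .
  next
    case False
    then have "\<bar>Dpsi d x y i\<bar> \<le> row_bound d 0 c c * \<tau>"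
      using i xn[of "i - 1"] xn[of i] xn[of "i + 1"] y by (intro abs_Dpsi_row_le_row_bound) auto
    also have "\<dots> \<le> sub_coeff_bound d a b c * \<bar>y 1\<bar> + rest * \<tau>"
      using \<tau> sub_nonneg by (intro add_increasing mult_right_mono) (auto simp: rest_def)
    finally show ?thesis .
  qed
qed (use d in auto)

text \<open>For d = 2 the range of x_1 is split at its midpoint: the bound on row 2 over all of [a, b]
  exceeds 1.\<close>
definition opnorm_bound :: "nat \<Rightarrow> real \<Rightarrow> real \<Rightarrow> real \<Rightarrow> real" where
  "opnorm_bound d a b c =
     (if d = 2 then
        let m = (a + b) / 2 in
        max (first_diag_coeff_bound 2 a c + first_super_coeff_bound 2 a b c)
          (max (row_bound 2 a m c) (max (row_bound 2 m b c) (row_bound 2 0 c c)))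
      else
        max (first_diag_coeff_bound d a c + sub_coeff_bound d a b c)
          (first_super_coeff_bound d a b c
             + max (diag_coeff_bound d a b c + super_coeff_bound d b c) (row_bound d 0 c c)))"

lemma opnorm_Dpsi_le_opnorm_bound:
  fixes x :: "nat \<Rightarrow> real"
  assumes d: "2 \<le> d" and x: "0 < a" "a \<le> x 1" "x 1 \<le> b" and c: "c \<le> 1"
    and xn: "\<And>n. 2 \<le> n \<Longrightarrow> 0 \<le> x n \<and> x n \<le> c"
  shows "opnorm_Dpsi d x \<le> ereal (opnorm_bound d a b c)"
proof (cases "d = 2")
  case True
  then show ?thesis
    using opnorm_Dpsi_2_le[of a x b "(a + b) / 2" c] x c xn by (simp add: opnorm_bound_def Let_def)
next
  case False
  then show ?thesis
    using opnorm_Dpsi_ge3_le[of d a x b c] d x c xn by (simp add: opnorm_bound_def)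
qed

lemma opnorm_bound_abc_less:
  assumes "2 \<le> d" "d \<le> 7"
  shows "case abc d of (a, b, c) \<Rightarrow> 0 < a \<and> c \<le> 1 \<and> opnorm_bound d a b c < 0.99"
proof -
  have "d \<in> {2, 3, 4, 5, 6, 7}"
    using assms by auto
  then show ?thesis
    by (elim insertE emptyE)
      (simp_all add: abc_def opnorm_bound_def first_diag_coeff_bound_def first_super_coeff_bound_def
        row_bound_def sub_coeff_bound_def diag_coeff_bound_def super_coeff_bound_def base_bound_def
        Let_def power_divide max_def min_def)
qed

theorem proposition2p9:
  fixes d :: nat and a b c :: real and x :: "nat \<Rightarrow> real"
  assumes "2 \<le> d" and "d \<le> 7"
    and "abc d = (a, b, c)"
    and "x \<in> S_set a b c"
  shows "opnorm_Dpsi d x < ereal 0.99"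
proof -
  have x1: "a \<le> x 1" "x 1 \<le> b" and xn: "\<And>n. 2 \<le> n \<Longrightarrow> 0 \<le> x n \<and> x n \<le> c"
    using assms(4) by (auto simp: S_set_def)
  have abc: "0 < a" "c \<le> 1" "opnorm_bound d a b c < 0.99"
    using opnorm_bound_abc_less[OF assms(1,2)] assms(3) by simp_all
  have "opnorm_Dpsi d x \<le> ereal (opnorm_bound d a b c)"
    using assms(1) abc(1) x1 abc(2) xn by (rule opnorm_Dpsi_le_opnorm_bound)
  also have "\<dots> < ereal 0.99"
    using abc(3) by simp
  finally show ?thesis .
qed

end
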